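(* Let $g(x)=e^{-5x^2}$, $s_1=1.5$, $s_2=-1.5$, $\Phi_0(x)=x^2$, and let $\psi_1(x)=\widetilde\psi(2x)$, where $\widetilde\psi(x)=e^{-x^2/(1-x^2)}$ for $|x|<1$ and $\widetilde\psi(x)=0$ otherwise. For $\varepsilon>0$ and $y>0$ define $$u^\varepsilon(x,y)=g(x-s_1-y)\,e^{i\Phi_0(x-y)/\varepsilon}+g(x-s_2+y)\,e^{i\Phi_0(x+y)/\varepsilon},$$ which is the value at time $T=1$ of the exact solution of the one-dimensional wave equation $u_{tt}=y^2u_{xx}$ with initial data $u(0,x)=(g(x-s_1)+g(x-s_2))e^{i\Phi_0(x)/\varepsilon}$ and $u_t(0,x)=-y\big(g'(x-s_1)+\tfrac{i\Phi_0'(x)}{\varepsilon}g(x-s_1)\big)e^{i\Phi_0(x)/\varepsilon}+y\big(g'(x-s_2)+\tfrac{i\Phi_0'(x)}{\varepsilon}g(x-s_2)\big)e^{i\Phi_0(x)/\varepsilon}$. Define $$\mathcal Q^\varepsilon_1(y)=\int_{\mathbb R}|u^\varepsilon(x,y)|^2\,\psi_1(x)\,dx .$$ Then for every compact interval $[a,b]\subset(0,\infty)$ and every integer $k\ge 0$ there is a constant $C_k$, independent of $\varepsilon\in(0,1]$, such that $$\sup_{y\in[a,b]}\left|\frac{d^k}{dy^k}\mathcal Q^\varepsilon_1(y)\right|\le C_k\qquad\text{for all }\varepsilon\in(0,1].$$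
   Context: Here $\varepsilon$ is a small positive parameter representing the wavelength; $\psi_1$ is a smooth compactly supported real-valued function on $\mathbb R$. The point of the statement is that the bound on all $y$-derivatives of the quadratic quantity $\mathcal Q_1^\varepsilon$ is uniform in $\varepsilon$, even though $u^\varepsilon$ itself oscillates on scale $\varepsilon$ in both $x$ and $y$. *)

theory Defs
  imports "HOL-Analysis.Analysis"
begin

definition g :: "real \<Rightarrow> real" where
  "g x = exp (-5 * x\<^sup>2)"

definition s1 :: real where "s1 = 3/2"
definition s2 :: real where "s2 = -3/2"

definition Phi0 :: "real \<Rightarrow> real" where
  "Phi0 x = x\<^sup>2"

definition psi_tilde :: "real \<Rightarrow> real" where
  "psi_tilde x = (if \<bar>x\<bar> < 1 then exp (- x\<^sup>2 / (1 - x\<^sup>2)) else 0)"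

definition psi1 :: "real \<Rightarrow> real" where
  "psi1 x = psi_tilde (2 * x)"

definition u :: "real \<Rightarrow> real \<Rightarrow> real \<Rightarrow> complex" where
  "u eps x y =
     complex_of_real (g (x - s1 - y)) * exp (\<i> * complex_of_real (Phi0 (x - y) / eps))
   + complex_of_real (g (x - s2 + y)) * exp (\<i> * complex_of_real (Phi0 (x + y) / eps))"

definition Q1 :: "real \<Rightarrow> real \<Rightarrow> real" where
  "Q1 eps y = (\<integral>x. (cmod (u eps x y))\<^sup>2 * psi1 x \<partial>lborel)"

end

theory Submission
  imports Defs "HOL-Computational_Algebra.Polynomial"
begin

text \<open>
  Substituting \<open>x = t / y\<close> turns the phase difference
  \<open>(\<Phi>\<^sub>0(x - y) - \<Phi>\<^sub>0(x + y)) / \<epsilon> = -4 x y / \<epsilon>\<close> into \<open>-4 t / \<epsilon>\<close>, which no longer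
  depends on \<open>y\<close>. Hence \<open>Q\<^sub>1\<^sup>\<epsilon>(y) = \<integral> Q1_mean(y,t) + cos(4t/\<epsilon>) Q1_osc(y,t) dt\<close>, where
  \<open>Q1_mean\<close> and \<open>Q1_osc\<close> are smooth in \<open>y > 0\<close>, independent of \<open>\<epsilon>\<close> and supported in
  \<open>|t| \<le> y/2\<close>. Differentiating under the integral only ever hits them, and the
  oscillating factor is bounded by 1, so every \<open>y\<close>-derivative of \<open>Q\<^sub>1\<^sup>\<epsilon>\<close> is
  bounded on \<open>[a, b]\<close> uniformly in \<open>\<epsilon>\<close>.
\<close>

text \<open>
  Derivatives of the flat function \<open>s \<mapsto> exp (-1/s)\<close>: since
  \<open>(p(1/s) e\<^sup>-\<^sup>1\<^sup>/\<^sup>s)' = (1/s)\<^sup>2 (p - p')(1/s) e\<^sup>-\<^sup>1\<^sup>/\<^sup>s\<close>, they are \<open>P\<^sub>j(1/s) e\<^sup>-\<^sup>1\<^sup>/\<^sup>s\<close> with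
  \<open>P\<^sub>j\<^sub>+\<^sub>1(z) = z\<^sup>2 (P\<^sub>j - P\<^sub>j')(z)\<close>.
\<close>
fun exp_inv_poly :: "nat \<Rightarrow> real poly" where
  "exp_inv_poly 0 = 1"
| "exp_inv_poly (Suc j) = [:0, 0, 1:] * (exp_inv_poly j - pderiv (exp_inv_poly j))"

definition exp_inv_deriv :: "nat \<Rightarrow> real \<Rightarrow> real" where
  "exp_inv_deriv j s = (if s > 0 then poly (exp_inv_poly j) (1 / s) * exp (- (1 / s)) else 0)"

lemma poly_times_exp_neg_tendsto_0: "((\<lambda>z. poly p z * exp (- z)) \<longlongrightarrow> (0::real)) at_top"
proof -
  have "((\<lambda>z. \<Sum>i\<le>degree p. coeff p i * (z ^ i / exp z)) \<longlongrightarrow> (\<Sum>i\<le>degree p. coeff p i * 0)) at_top"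
    by (intro tendsto_sum tendsto_mult tendsto_const tendsto_power_div_exp_0)
  moreover have "(\<Sum>i\<le>degree p. coeff p i * (z ^ i / exp z)) = poly p z * exp (- z)" for z
    by (simp add: poly_altdef sum_distrib_right exp_minus divide_inverse mult.assoc)
  ultimately show ?thesis by simp
qed

lemma exp_inv_deriv_has_derivative_at_0:
  "(exp_inv_deriv j has_real_derivative exp_inv_deriv (Suc j) 0) (at 0)"
proof -
  have "((\<lambda>x. (exp_inv_deriv j x - exp_inv_deriv j 0) / (x - 0)) \<longlongrightarrow> 0) (at 0)"
  proof (rule filterlim_split_at)
    have "\<forall>\<^sub>F x in at_left (0::real). x < 0" by (simp add: eventually_at_filter)
    then have "\<forall>\<^sub>F x in at_left 0. (exp_inv_deriv j x - exp_inv_deriv j 0) / (x - 0) = (0::real)"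
      by eventually_elim (auto simp: exp_inv_deriv_def)
    then show "((\<lambda>x. (exp_inv_deriv j x - exp_inv_deriv j 0) / (x - 0)) \<longlongrightarrow> 0) (at_left 0)"
      by (rule tendsto_eventually)
  next
    \<comment> \<open>For \<open>x > 0\<close> the difference quotient is \<open>q(1/x) e\<^sup>-\<^sup>1\<^sup>/\<^sup>x\<close> with \<open>q = z \<cdot> P\<^sub>j(z)\<close>.\<close>
    have "((\<lambda>x. poly (pCons 0 (exp_inv_poly j)) (inverse x) * exp (- inverse x)) \<longlongrightarrow> (0::real))
            (at_right 0)"
      by (rule filterlim_compose[OF poly_times_exp_neg_tendsto_0 filterlim_inverse_at_top_right])
    moreover have "\<forall>\<^sub>F x in at_right (0::real). x > 0" by (simp add: eventually_at_filter)
    then have "\<forall>\<^sub>F x in at_right 0. poly (pCons 0 (exp_inv_poly j)) (inverse x) * exp (- inverse x)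
                 = (exp_inv_deriv j x - exp_inv_deriv j 0) / (x - 0)"
      by eventually_elim (auto simp: exp_inv_deriv_def field_simps)
    ultimately show "((\<lambda>x. (exp_inv_deriv j x - exp_inv_deriv j 0) / (x - 0)) \<longlongrightarrow> 0) (at_right 0)"
      by (rule Lim_transform_eventually)
  qed
  then show ?thesis by (simp add: has_field_derivative_iff exp_inv_deriv_def)
qed

lemma exp_inv_deriv_has_derivative:
  "(exp_inv_deriv j has_real_derivative exp_inv_deriv (Suc j) s) (at s)"
proof (cases s "0::real" rule: linorder_cases)
  case less
  have "((\<lambda>s. 0) has_real_derivative exp_inv_deriv (Suc j) s) (at s)"
    using less by (auto intro!: derivative_eq_intros simp: exp_inv_deriv_def)
  then show ?thesis
    by (rule has_field_derivative_transform_within_open[where S = "{..<0}"])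
       (use less in \<open>auto simp: exp_inv_deriv_def\<close>)
next
  case equal
  then show ?thesis using exp_inv_deriv_has_derivative_at_0 by simp
next
  case greater
  have "((\<lambda>s. poly (exp_inv_poly j) (1 / s) * exp (- (1 / s))) has_real_derivative
          exp_inv_deriv (Suc j) s) (at s)"
    using greater
    by (auto intro!: derivative_eq_intros simp: exp_inv_deriv_def)
       (simp add: field_simps power2_eq_square)
  then show ?thesis
    by (rule has_field_derivative_transform_within_open[where S = "{0<..}"])
       (use greater in \<open>auto simp: exp_inv_deriv_def\<close>)
qed

lemma exp_inv_deriv_chain [derivative_intros]:
  "(f has_real_derivative f') (at x within A) \<Longrightarrow>
   ((\<lambda>x. exp_inv_deriv j (f x)) has_real_derivative exp_inv_deriv (Suc j) (f x) * f') (at x within A)"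
  using DERIV_chain[OF exp_inv_deriv_has_derivative, of f f' x A j] by (simp add: o_def)

lemma continuous_on_exp_inv_deriv [continuous_intros]:
  "continuous_on S f \<Longrightarrow> continuous_on S (\<lambda>x. exp_inv_deriv j (f x))"
  by (rule continuous_on_compose2[of UNIV "exp_inv_deriv j"])
     (auto intro: DERIV_isCont continuous_at_imp_continuous_on exp_inv_deriv_has_derivative)

lemma psi_tilde_eq_exp_inv_deriv: "psi_tilde x = exp 1 * exp_inv_deriv 0 (1 - x\<^sup>2)"
proof (cases "\<bar>x\<bar> < 1")
  case True
  then have "x\<^sup>2 < 1" by (simp add: abs_square_less_1)
  then have "- x\<^sup>2 / (1 - x\<^sup>2) = 1 + - (1 / (1 - x\<^sup>2))" by (simp add: field_simps)
  then show ?thesis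
    using True \<open>x\<^sup>2 < 1\<close> by (simp add: psi_tilde_def exp_inv_deriv_def flip: exp_add)
next
  case False
  then show ?thesis by (simp add: psi_tilde_def exp_inv_deriv_def abs_square_less_1)
qed

lemma psi1_eq_0: "1 / 2 \<le> \<bar>x\<bar> \<Longrightarrow> psi1 x = 0"
  by (simp add: psi1_def psi_tilde_def)

text \<open>
  An algebra of functions \<open>F y t\<close> that are continuous on \<open>y > 0\<close> and closed under
  \<open>\<partial>/\<partial>y\<close>; it contains the integrands of \<open>Q\<^sub>1\<^sup>\<epsilon>\<close> after the substitution \<open>x = t / y\<close>.
\<close>
inductive_set y_smooth :: "(real \<Rightarrow> real \<Rightarrow> real) set" where
  const: "(\<lambda>y t. c) \<in> y_smooth"
| var_t: "(\<lambda>y t. t) \<in> y_smooth"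
| var_y: "(\<lambda>y t. y) \<in> y_smooth"
| inverse_y: "(\<lambda>y t. 1 / y) \<in> y_smooth"
| exp: "f \<in> y_smooth \<Longrightarrow> (\<lambda>y t. exp (f y t)) \<in> y_smooth"
| exp_inv_deriv: "f \<in> y_smooth \<Longrightarrow> (\<lambda>y t. exp_inv_deriv j (f y t)) \<in> y_smooth"
| add: "f \<in> y_smooth \<Longrightarrow> h \<in> y_smooth \<Longrightarrow> (\<lambda>y t. f y t + h y t) \<in> y_smooth"
| mult: "f \<in> y_smooth \<Longrightarrow> h \<in> y_smooth \<Longrightarrow> (\<lambda>y t. f y t * h y t) \<in> y_smooth"

lemma y_smooth_diff:
  assumes "f \<in> y_smooth" "h \<in> y_smooth"
  shows "(\<lambda>y t. f y t - h y t) \<in> y_smooth"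
proof -
  have "(\<lambda>y t. f y t + (-1) * h y t) \<in> y_smooth"
    using assms by (intro y_smooth.intros)
  then show ?thesis by simp
qed

lemma y_smooth_continuous_on:
  "F \<in> y_smooth \<Longrightarrow> continuous_on ({0<..} \<times> UNIV) (\<lambda>p. F (fst p) (snd p))"
  by (induction rule: y_smooth.induct) (auto intro!: continuous_intros)

lemma y_smooth_continuous_on_subset:
  "F \<in> y_smooth \<Longrightarrow> A \<subseteq> {0<..} \<times> UNIV \<Longrightarrow> continuous_on A (\<lambda>(y, t). F y t)"
  using continuous_on_subset[OF y_smooth_continuous_on] by (simp add: split_beta')

lemma y_smooth_continuous_on_t:
  assumes "F \<in> y_smooth" "0 < y"
  shows "continuous_on S (F y)"
proof -
  have "continuous_on S (\<lambda>t. (\<lambda>p. F (fst p) (snd p)) (y, t))"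
    by (rule continuous_on_compose2[OF y_smooth_continuous_on[OF assms(1)]])
       (use assms(2) in \<open>auto intro!: continuous_intros\<close>)
  then show ?thesis by simp
qed

definition has_y_derivative :: "(real \<Rightarrow> real \<Rightarrow> real) \<Rightarrow> (real \<Rightarrow> real \<Rightarrow> real) \<Rightarrow> bool" where
  "has_y_derivative F F' \<longleftrightarrow> (\<forall>y t. 0 < y \<longrightarrow> ((\<lambda>y. F y t) has_real_derivative F' y t) (at y))"

lemma y_smooth_has_y_derivative:
  "F \<in> y_smooth \<Longrightarrow> \<exists>F' \<in> y_smooth. has_y_derivative F F'"
proof (induction rule: y_smooth.induct)
  case (const c)
  have "has_y_derivative (\<lambda>y t. c) (\<lambda>y t. 0)"
    unfolding has_y_derivative_def by (auto intro!: derivative_eq_intros)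
  then show ?case using y_smooth.const by blast
next
  case var_t
  have "has_y_derivative (\<lambda>y t. t) (\<lambda>y t. 0)"
    unfolding has_y_derivative_def by (auto intro!: derivative_eq_intros)
  then show ?case using y_smooth.const by blast
next
  case var_y
  have "has_y_derivative (\<lambda>y t. y) (\<lambda>y t. 1)"
    unfolding has_y_derivative_def by (auto intro!: derivative_eq_intros)
  then show ?case using y_smooth.const by blast
next
  case inverse_y
  have "has_y_derivative (\<lambda>y t. 1 / y) (\<lambda>y t. (-1) * (1 / y * (1 / y)))"
    unfolding has_y_derivative_def
    by (auto intro!: derivative_eq_intros simp: power2_eq_square field_simps)
  moreover have "(\<lambda>y t. (-1) * (1 / y * (1 / y))) \<in> y_smooth" by (intro y_smooth.intros)
  ultimately show ?case by blast
next
  case (exp f)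
  then obtain f' where "f' \<in> y_smooth" "has_y_derivative f f'" by blast
  then have "(\<lambda>y t. exp (f y t) * f' y t) \<in> y_smooth"
    and "has_y_derivative (\<lambda>y t. exp (f y t)) (\<lambda>y t. exp (f y t) * f' y t)"
    using exp.hyps unfolding has_y_derivative_def
    by (auto intro!: y_smooth.intros derivative_eq_intros)
  then show ?case by blast
next
  case (exp_inv_deriv f j)
  then obtain f' where "f' \<in> y_smooth" "has_y_derivative f f'" by blast
  then have "(\<lambda>y t. exp_inv_deriv (Suc j) (f y t) * f' y t) \<in> y_smooth"
    and "has_y_derivative (\<lambda>y t. exp_inv_deriv j (f y t))
           (\<lambda>y t. exp_inv_deriv (Suc j) (f y t) * f' y t)"
    using exp_inv_deriv.hyps unfolding has_y_derivative_def
    by (auto intro!: y_smooth.intros derivative_eq_intros)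
  then show ?case by blast
next
  case (add f h)
  then obtain f' h' where "f' \<in> y_smooth" "has_y_derivative f f'" "h' \<in> y_smooth" "has_y_derivative h h'"
    by blast
  then have "(\<lambda>y t. f' y t + h' y t) \<in> y_smooth"
    and "has_y_derivative (\<lambda>y t. f y t + h y t) (\<lambda>y t. f' y t + h' y t)"
    unfolding has_y_derivative_def by (auto intro!: y_smooth.intros derivative_eq_intros)
  then show ?case by blast
next
  case (mult f h)
  then obtain f' h' where "f' \<in> y_smooth" "has_y_derivative f f'" "h' \<in> y_smooth" "has_y_derivative h h'"
    by blast
  then have "(\<lambda>y t. f' y t * h y t + f y t * h' y t) \<in> y_smooth"
    and "has_y_derivative (\<lambda>y t. f y t * h y t) (\<lambda>y t. f' y t * h y t + f y t * h' y t)"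
    using mult.hyps unfolding has_y_derivative_def by (auto intro!: y_smooth.intros derivative_eq_intros)
  then show ?case by blast
qed

definition y_deriv :: "(real \<Rightarrow> real \<Rightarrow> real) \<Rightarrow> (real \<Rightarrow> real \<Rightarrow> real)" where
  "y_deriv F = (SOME F'. F' \<in> y_smooth \<and> has_y_derivative F F')"

lemma y_deriv_in_y_smooth_and_has_y_derivative:
  assumes "F \<in> y_smooth"
  shows y_deriv_in_y_smooth: "y_deriv F \<in> y_smooth"
    and has_y_derivative_y_deriv: "has_y_derivative F (y_deriv F)"
  using someI_ex[OF y_smooth_has_y_derivative[OF assms, unfolded Bex_def]]
  by (simp_all add: y_deriv_def)

lemma funpow_y_deriv_in_y_smooth: "F \<in> y_smooth \<Longrightarrow> (y_deriv ^^ k) F \<in> y_smooth"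
  by (induction k) (simp_all add: y_deriv_in_y_smooth)

lemma y_smooth_bounded:
  assumes "F \<in> y_smooth" "0 < a"
  obtains B where "\<And>y t. y \<in> {a..b} \<Longrightarrow> t \<in> {-R..R} \<Longrightarrow> \<bar>F y t\<bar> \<le> B"
proof -
  have "continuous_on ({a..b} \<times> {-R..R}) (\<lambda>(y, t). F y t)"
    by (rule y_smooth_continuous_on_subset[OF assms(1)]) (use assms(2) in auto)
  then obtain B where "\<And>p. p \<in> {a..b} \<times> {-R..R} \<Longrightarrow> norm ((\<lambda>(y, t). F y t) p) \<le> B"
    using continuous_on_compact_bound[OF compact_Times[OF compact_Icc compact_Icc]] by blast
  then show ?thesis using that by fastforce
qed

definition window_integral ::
    "real \<Rightarrow> (real \<Rightarrow> real) \<Rightarrow> (real \<Rightarrow> real \<Rightarrow> real) \<Rightarrow> real \<Rightarrow> real" where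
  "window_integral R c F y = integral {-R..R} (\<lambda>t. c t * F y t)"

lemma window_integral_has_derivative:
  assumes F: "F \<in> y_smooth" and c: "continuous_on UNIV c" and y: "0 < y"
  shows "(window_integral R c F has_real_derivative window_integral R c (y_deriv F) y) (at y)"
proof -
  have "((\<lambda>y. integral (cbox (-R) R) (\<lambda>t. c t * F y t)) has_field_derivative
          integral (cbox (-R) R) (\<lambda>t. c t * y_deriv F y t)) (at y within {0<..})"
  proof (rule leibniz_rule_field_derivative[where fx = "\<lambda>y t. c t * y_deriv F y t"])
    fix x t :: real assume "x \<in> {0<..}"
    then have "((\<lambda>y. F y t) has_real_derivative y_deriv F x t) (at x)"
      using has_y_derivative_y_deriv[OF F] by (simp add: has_y_derivative_def)
    then show "((\<lambda>x. c t * F x t) has_field_derivative c t * y_deriv F x t) (at x within {0<..})"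
      by (rule has_field_derivative_at_within[OF DERIV_cmult])
  next
    fix x :: real assume "x \<in> {0<..}"
    then show "(\<lambda>t. c t * F x t) integrable_on cbox (-R) R"
      by (intro integrable_continuous continuous_on_mult continuous_on_subset[OF c]
            y_smooth_continuous_on_t[OF F]) auto
  next
    have "continuous_on ({0<..} \<times> cbox (-R) R) (\<lambda>(y, t). y_deriv F y t)"
      by (rule y_smooth_continuous_on_subset[OF y_deriv_in_y_smooth[OF F]]) auto
    moreover have "continuous_on ({0<..} \<times> cbox (-R) R) (\<lambda>p. c (snd p))"
      by (rule continuous_on_compose2[OF c]) (intro continuous_intros, auto)
    ultimately have "continuous_on ({0<..} \<times> cbox (-R) R)
                       (\<lambda>p. c (snd p) * (\<lambda>(y, t). y_deriv F y t) p)"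
      by (intro continuous_intros)
    then show "continuous_on ({0<..} \<times> cbox (-R) R) (\<lambda>(x, t). c t * y_deriv F x t)"
      by (simp add: split_beta')
  qed (use y in auto)
  then have "((\<lambda>y. integral {-R..R} (\<lambda>t. c t * F y t)) has_field_derivative
               integral {-R..R} (\<lambda>t. c t * y_deriv F y t)) (at y)"
    using at_within_open[of y "{0<..}"] y by (simp only: cbox_interval) simp
  moreover have "window_integral R c F = (\<lambda>y. integral {-R..R} (\<lambda>t. c t * F y t))"
    by (simp add: window_integral_def fun_eq_iff)
  ultimately show ?thesis by (simp add: window_integral_def)
qed

lemma window_integral_bound:
  assumes F: "F \<in> y_smooth" and c: "continuous_on UNIV c" "\<And>t. \<bar>c t\<bar> \<le> 1"
    and y: "0 < y" and R: "0 \<le> R" and B: "\<And>t. t \<in> {-R..R} \<Longrightarrow> \<bar>F y t\<bar> \<le> B"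
  shows "\<bar>window_integral R c F y\<bar> \<le> B * (2 * R)"
proof -
  have "norm (integral {-R..R} (\<lambda>t. c t * F y t)) \<le> B * (R - - R)"
  proof (rule integral_bound)
    show "continuous_on {-R..R} (\<lambda>t. c t * F y t)"
      by (intro continuous_on_mult continuous_on_subset[OF c(1)] y_smooth_continuous_on_t[OF F y]) auto
  next
    fix t assume "t \<in> {-R..R}"
    then have "\<bar>c t\<bar> * \<bar>F y t\<bar> \<le> 1 * B"
      by (intro mult_mono) (use c(2)[of t] B in auto)
    then show "norm (c t * F y t) \<le> B" by (simp add: abs_mult)
  qed (use R in auto)
  then show ?thesis by (simp add: window_integral_def)
qed

lemma lborel_integral_eq_interval_integral:
  fixes h :: "real \<Rightarrow> real"
  assumes h: "continuous_on UNIV h" and vanish: "\<And>t. t \<notin> {a..b} \<Longrightarrow> h t = 0"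
  shows "integral\<^sup>L lborel h = integral {a..b} h"
proof -
  have "set_integrable lborel {a..b} h"
    by (rule borel_integrable_atLeastAtMost') (rule continuous_on_subset[OF h], auto)
  moreover have "(\<lambda>x. indicator {a..b} x *\<^sub>R h x) = h"
    using vanish by (auto simp: fun_eq_iff indicator_def)
  ultimately have "(h has_integral integral\<^sup>L lborel h) UNIV"
    by (simp add: set_integrable_def has_integral_integral_lborel)
  moreover have "(h has_integral integral {a..b} h) UNIV"
    using integrable_integral[OF integrable_continuous_real[OF continuous_on_subset[OF h]]] vanish
    by (rule has_integral_on_superset) auto
  ultimately show ?thesis by (rule has_integral_unique)
qed

lemma cmod_sum_cis_squared:
  fixes a b \<alpha> \<beta> :: real
  shows "(cmod (of_real a * exp (\<i> * of_real \<alpha>) + of_real b * exp (\<i> * of_real \<beta>)))\<^sup>2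
         = a\<^sup>2 + b\<^sup>2 + 2 * a * b * cos (\<alpha> - \<beta>)"
proof -
  have "(cmod (of_real a * exp (\<i> * of_real \<alpha>) + of_real b * exp (\<i> * of_real \<beta>)))\<^sup>2
        = (a * cos \<alpha> + b * cos \<beta>)\<^sup>2 + (a * sin \<alpha> + b * sin \<beta>)\<^sup>2"
    by (simp add: cmod_power2 Re_exp Im_exp)
  also have "\<dots> = a\<^sup>2 * ((sin \<alpha>)\<^sup>2 + (cos \<alpha>)\<^sup>2) + b\<^sup>2 * ((sin \<beta>)\<^sup>2 + (cos \<beta>)\<^sup>2)
                 + 2 * a * b * (cos \<alpha> * cos \<beta> + sin \<alpha> * sin \<beta>)"
    by algebra
  finally show ?thesis by (simp add: cos_diff)
qed

definition Q1_mean :: "real \<Rightarrow> real \<Rightarrow> real" where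
  "Q1_mean y t = ((g (t / y - s1 - y))\<^sup>2 + (g (t / y - s2 + y))\<^sup>2) * psi1 (t / y) / y"

definition Q1_osc :: "real \<Rightarrow> real \<Rightarrow> real" where
  "Q1_osc y t = 2 * g (t / y - s1 - y) * g (t / y - s2 + y) * psi1 (t / y) / y"

lemma y_smooth_g: "f \<in> y_smooth \<Longrightarrow> (\<lambda>y t. g (f y t)) \<in> y_smooth"
proof -
  assume "f \<in> y_smooth"
  then have "(\<lambda>y t. exp ((-5) * (f y t * f y t))) \<in> y_smooth" by (intro y_smooth.intros)
  then show ?thesis by (simp add: g_def power2_eq_square)
qed

lemma y_smooth_psi1: "f \<in> y_smooth \<Longrightarrow> (\<lambda>y t. psi1 (f y t)) \<in> y_smooth"
proof -
  assume "f \<in> y_smooth"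
  then have "(\<lambda>y t. exp 1 * exp_inv_deriv 0 (1 - (2 * f y t) * (2 * f y t))) \<in> y_smooth"
    by (intro y_smooth.intros y_smooth_diff)
  then show ?thesis by (simp add: psi1_def psi_tilde_eq_exp_inv_deriv power2_eq_square)
qed

lemma Q1_mean_in_y_smooth: "Q1_mean \<in> y_smooth"
proof -
  have "(\<lambda>y t. (g (t * (1 / y) - s1 - y) * g (t * (1 / y) - s1 - y)
              + g (t * (1 / y) - s2 + y) * g (t * (1 / y) - s2 + y)) * psi1 (t * (1 / y)) * (1 / y))
        \<in> y_smooth"
    by (intro y_smooth.intros y_smooth_diff y_smooth_g y_smooth_psi1)
  then show ?thesis by (simp add: Q1_mean_def[abs_def] power2_eq_square)
qed

lemma Q1_osc_in_y_smooth: "Q1_osc \<in> y_smooth"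
proof -
  have "(\<lambda>y t. 2 * g (t * (1 / y) - s1 - y) * g (t * (1 / y) - s2 + y) * psi1 (t * (1 / y)) * (1 / y))
        \<in> y_smooth"
    by (intro y_smooth.intros y_smooth_diff y_smooth_g y_smooth_psi1)
  then show ?thesis by (simp add: Q1_osc_def[abs_def])
qed

lemma Q1_integrand_rescaled:
  assumes "0 < y" "0 < eps"
  shows "(cmod (u eps (t / y) y))\<^sup>2 * psi1 (t / y) / y = Q1_mean y t + cos (4 * t / eps) * Q1_osc y t"
proof -
  have "Phi0 (t / y - y) / eps - Phi0 (t / y + y) / eps = - (4 * t / eps)"
    using assms by (simp add: Phi0_def field_simps power2_eq_square)
  then have "(cmod (u eps (t / y) y))\<^sup>2 = (g (t / y - s1 - y))\<^sup>2 + (g (t / y - s2 + y))\<^sup>2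
               + 2 * g (t / y - s1 - y) * g (t / y - s2 + y) * cos (4 * t / eps)"
    unfolding u_def cmod_sum_cis_squared by simp
  then show ?thesis by (simp add: Q1_mean_def Q1_osc_def algebra_simps add_divide_distrib)
qed

lemma Q1_eq_window_integrals:
  assumes "0 < y" "y < 2 * R" "0 < eps"
  shows "Q1 eps y = window_integral R (\<lambda>t. 1) Q1_mean y
                    + window_integral R (\<lambda>t. cos (4 * t / eps)) Q1_osc y"
proof -
  define f where "f x = (cmod (u eps x y))\<^sup>2 * psi1 x" for x
  define h where "h t = Q1_mean y t + cos (4 * t / eps) * Q1_osc y t" for t
  have cont_mean: "continuous_on S (Q1_mean y)" for S
    by (rule y_smooth_continuous_on_t[OF Q1_mean_in_y_smooth \<open>0 < y\<close>])
  have cont_osc: "continuous_on S (\<lambda>t. cos (4 * t / eps) * Q1_osc y t)" for S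
    using y_smooth_continuous_on_t[OF Q1_osc_in_y_smooth \<open>0 < y\<close>] \<open>0 < eps\<close>
    by (auto intro!: continuous_intros)
  have "Q1 eps y = \<bar>1 / y\<bar> *\<^sub>R (\<integral>t. f (0 + 1 / y * t) \<partial>lborel)"
    unfolding Q1_def f_def[symmetric] by (rule lborel_integral_real_affine) (use assms in simp)
  also have "\<dots> = (\<integral>t. 1 / y * f (t / y) \<partial>lborel)"
    using assms by (simp add: integral_mult_right_zero)
  also have "\<dots> = (\<integral>t. h t \<partial>lborel)"
    using Q1_integrand_rescaled[OF assms(1,3)] by (simp add: f_def h_def)
  also have "\<dots> = integral {-R..R} h"
  proof (rule lborel_integral_eq_interval_integral)
    show "continuous_on UNIV h" unfolding h_def by (intro continuous_on_add cont_mean cont_osc)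
    fix t assume "t \<notin> {-R..R}"
    then have "1 / 2 \<le> \<bar>t / y\<bar>" using assms by (auto simp: field_simps)
    then show "h t = 0" by (simp add: h_def Q1_mean_def Q1_osc_def psi1_eq_0)
  qed
  also have "\<dots> = integral {-R..R} (\<lambda>t. 1 * Q1_mean y t) + integral {-R..R} (\<lambda>t. cos (4 * t / eps) * Q1_osc y t)"
    unfolding h_def using cont_mean cont_osc
    by (simp add: integral_add integrable_continuous_real)
  finally show ?thesis by (simp add: window_integral_def)
qed

lemma Q1_higher_deriv_eq_window_integrals:
  assumes "0 < eps"
  shows "\<forall>y \<in> {0<..<2 * R}. (deriv ^^ k) (Q1 eps) y
           = window_integral R (\<lambda>t. 1) ((y_deriv ^^ k) Q1_mean) y
             + window_integral R (\<lambda>t. cos (4 * t / eps)) ((y_deriv ^^ k) Q1_osc) y"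
proof (induction k)
  case 0
  then show ?case using Q1_eq_window_integrals[OF _ _ assms] by auto
next
  case (Suc k)
  show ?case
  proof
    fix y assume y: "y \<in> {0<..<2 * R}"
    have "((\<lambda>y. window_integral R (\<lambda>t. 1) ((y_deriv ^^ k) Q1_mean) y
                + window_integral R (\<lambda>t. cos (4 * t / eps)) ((y_deriv ^^ k) Q1_osc) y)
          has_real_derivative window_integral R (\<lambda>t. 1) ((y_deriv ^^ Suc k) Q1_mean) y
                + window_integral R (\<lambda>t. cos (4 * t / eps)) ((y_deriv ^^ Suc k) Q1_osc) y) (at y)"
      using y assms
      by (auto intro!: DERIV_add window_integral_has_derivative funpow_y_deriv_in_y_smooth
                       Q1_mean_in_y_smooth Q1_osc_in_y_smooth continuous_intros)
    then have "((deriv ^^ k) (Q1 eps) has_real_derivative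
                 window_integral R (\<lambda>t. 1) ((y_deriv ^^ Suc k) Q1_mean) y
                 + window_integral R (\<lambda>t. cos (4 * t / eps)) ((y_deriv ^^ Suc k) Q1_osc) y) (at y)"
      by (rule has_field_derivative_transform_within_open[where S = "{0<..<2 * R}"])
         (use Suc.IH y in auto)
    then show "(deriv ^^ Suc k) (Q1 eps) y
                 = window_integral R (\<lambda>t. 1) ((y_deriv ^^ Suc k) Q1_mean) y
                   + window_integral R (\<lambda>t. cos (4 * t / eps)) ((y_deriv ^^ Suc k) Q1_osc) y"
      by (simp add: DERIV_imp_deriv)
  qed
qed

theorem mainTheorem1:
  fixes a b :: real and k :: nat
  assumes "0 < a" and "a \<le> b"
  shows "\<exists>C. \<forall>eps \<in> {0<..1}. \<forall>y \<in> {a..b}. \<bar>(deriv ^^ k) (Q1 eps) y\<bar> \<le> C"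
proof -
  note mean = funpow_y_deriv_in_y_smooth[OF Q1_mean_in_y_smooth, of k]
  note osc = funpow_y_deriv_in_y_smooth[OF Q1_osc_in_y_smooth, of k]
  obtain B1 where B1: "\<And>y t. y \<in> {a..b} \<Longrightarrow> t \<in> {-b..b} \<Longrightarrow> \<bar>(y_deriv ^^ k) Q1_mean y t\<bar> \<le> B1"
    using y_smooth_bounded[OF mean \<open>0 < a\<close>] by blast
  obtain B2 where B2: "\<And>y t. y \<in> {a..b} \<Longrightarrow> t \<in> {-b..b} \<Longrightarrow> \<bar>(y_deriv ^^ k) Q1_osc y t\<bar> \<le> B2"
    using y_smooth_bounded[OF osc \<open>0 < a\<close>] by blast
  have "\<bar>(deriv ^^ k) (Q1 eps) y\<bar> \<le> B1 * (2 * b) + B2 * (2 * b)"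
    if eps: "eps \<in> {0<..1}" and y: "y \<in> {a..b}" for eps y
  proof -
    have "0 < y" "y \<in> {0<..<2 * b}" using y assms by auto
    moreover have "\<bar>window_integral b (\<lambda>t. 1) ((y_deriv ^^ k) Q1_mean) y\<bar> \<le> B1 * (2 * b)"
      using B1[OF y] \<open>0 < y\<close> y assms by (intro window_integral_bound[OF mean]) auto
    moreover have "\<bar>window_integral b (\<lambda>t. cos (4 * t / eps)) ((y_deriv ^^ k) Q1_osc) y\<bar> \<le> B2 * (2 * b)"
      using B2[OF y] \<open>0 < y\<close> y assms eps by (intro window_integral_bound[OF osc]) (auto intro!: continuous_intros)
    ultimately show ?thesis
      using Q1_higher_deriv_eq_window_integrals[of eps b k] eps by auto
  qed
  then show ?thesis by blast
qed

end
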